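(* For $\lambda\ge1$ let $\mathcal{N}_1,\ldots,\mathcal{N}_\lambda$ be i.i.d. standard normal random variables and $\mathcal{N}_{1:\lambda}$ their minimum. Then $\mathbb{E}(\mathcal{N}_{1:1}^2)=\mathbb{E}(\mathcal{N}_{1:2}^2)=1$, and for all $\lambda\ge2$, $\mathbb{E}(\mathcal{N}_{1:\lambda+1}^2)>\mathbb{E}(\mathcal{N}_{1:\lambda}^2)$. *)

theory Defs
  imports "HOL-Probability.Probability"
begin

definition std_normal_measure :: "real measure" where
  "std_normal_measure = density lborel std_normal_density"

definition E_min_sq :: "nat \<Rightarrow> real" where
  "E_min_sq n =
     (\<integral>x. (Min (x ` {..<n}))\<^sup>2 \<partial>(PiM {..<n} (\<lambda>_. std_normal_measure)))"

end

theory Submission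
  imports Defs
begin

(*
  By the layer cake formula, E(M^2) = \<integral>\<^sub>0\<^sup>\<infinity> 2 t P(|M| \<ge> t) dt for any random variable M.
  If M is the minimum of n i.i.d. copies of a symmetric variable N with tail q(t) = P(N \<ge> t),
  then for t > 0 the event |M| \<ge> t splits into "all N_i \<ge> t" and "some N_i \<le> -t", so
  P(|M| \<ge> t) = q^n + 1 - (1 - q)^n.  Going from n + 1 to n + 2 changes this by
  q (1 - q) ((1 - q)^n - q^n), which vanishes for n = 0 and, since q(t) < 1/2 for t > 0,
  is positive for n \<ge> 1.
*)

lemma nn_integral_square_eq_tail_integral:
  fixes f :: "'a \<Rightarrow> real"
  assumes "sigma_finite_measure M" and [measurable]: "f \<in> borel_measurable M"
  shows "(\<integral>\<^sup>+x. ennreal ((f x)\<^sup>2) \<partial>M) =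
    (\<integral>\<^sup>+t. ennreal (2 * t) * emeasure M {x \<in> space M. t \<le> \<bar>f x\<bar>} * indicator {0<..} t \<partial>lborel)"
proof -
  interpret pair_sigma_finite M lborel
    using assms(1) by (simp add: pair_sigma_finite_def sigma_finite_lborel)
  have square: "ennreal (y\<^sup>2) = (\<integral>\<^sup>+t. ennreal (2 * t) * indicator {0..\<bar>y\<bar>} t \<partial>lborel)" for y :: real
  proof -
    have "(\<integral>\<^sup>+t. ennreal (2 * t) * indicator {0..\<bar>y\<bar>} t \<partial>lborel) = ennreal (\<bar>y\<bar>\<^sup>2 - 0\<^sup>2)"
      by (rule nn_integral_FTC_Icc[where F="\<lambda>t. t\<^sup>2"]) (auto intro!: derivative_eq_intros)
    then show ?thesis by simp
  qed
  have "(\<lambda>(x, t). ennreal (2 * t) * indicator {0..\<bar>f x\<bar>} t) \<in> borel_measurable (M \<Otimes>\<^sub>M lborel)"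
  proof -
    have "(\<lambda>(x, t). ennreal (2 * t) * indicator {0..\<bar>f x\<bar>} t) =
        (\<lambda>p. ennreal (2 * snd p) * indicator {p. 0 \<le> snd p \<and> snd p \<le> \<bar>f (fst p)\<bar>} p)"
      by (auto simp: fun_eq_iff indicator_def)
    then show ?thesis by simp
  qed
  then have "(\<integral>\<^sup>+x. ennreal ((f x)\<^sup>2) \<partial>M) =
      (\<integral>\<^sup>+t. (\<integral>\<^sup>+x. ennreal (2 * t) * indicator {0..\<bar>f x\<bar>} t \<partial>M) \<partial>lborel)"
    by (simp add: square Fubini')
  also have "\<dots> = (\<integral>\<^sup>+t. ennreal (2 * t) * emeasure M {x \<in> space M. t \<le> \<bar>f x\<bar>} * indicator {0<..} t \<partial>lborel)"
  proof (rule nn_integral_cong)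
    fix t :: real
    show "(\<integral>\<^sup>+x. ennreal (2 * t) * indicator {0..\<bar>f x\<bar>} t \<partial>M) =
        ennreal (2 * t) * emeasure M {x \<in> space M. t \<le> \<bar>f x\<bar>} * indicator {0<..} t"
    proof (cases "0 < t")
      case True
      then have "(\<integral>\<^sup>+x. ennreal (2 * t) * indicator {0..\<bar>f x\<bar>} t \<partial>M) =
          (\<integral>\<^sup>+x. ennreal (2 * t) * indicator {x \<in> space M. t \<le> \<bar>f x\<bar>} x \<partial>M)"
        by (intro nn_integral_cong) (auto simp: indicator_def)
      with True show ?thesis
        by (simp add: nn_integral_cmult_indicator)
    qed (cases "t = 0", auto simp: indicator_def)
  qed
  finally show ?thesis .
qed

lemma nn_integral_strict_mono:
  assumes [measurable]: "f \<in> borel_measurable M" "g \<in> borel_measurable M"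
    and "(\<integral>\<^sup>+x. f x \<partial>M) \<noteq> \<infinity>" and "AE x in M. f x \<le> g x"
    and "A \<in> sets M" "emeasure M A \<noteq> 0" "\<And>x. x \<in> A \<Longrightarrow> f x < g x"
  shows "(\<integral>\<^sup>+x. f x \<partial>M) < (\<integral>\<^sup>+x. g x \<partial>M)"
proof (rule nn_integral_less)
  show "\<not> (AE x in M. g x \<le> f x)"
  proof
    assume "AE x in M. g x \<le> f x"
    then have "AE x in M. x \<notin> A"
      by eventually_elim (use assms(7) in \<open>auto simp: not_le[symmetric]\<close>)
    with assms(5,6) show False
      using AE_iff_null_sets[OF assms(5)] by auto
  qed
qed (use assms in auto)

lemma enn2real_strict_mono: "a < b \<Longrightarrow> b < \<top> \<Longrightarrow> enn2real a < enn2real (b :: ennreal)"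
  by (metis enn2real_less_iff ennreal_enn2real less_trans top.not_eq_extremum)

context prob_space
begin

lemma measure_PiM_PiE_const:
  assumes "finite I" "A \<in> sets M"
  shows "measure (PiM I (\<lambda>_. M)) (PiE I (\<lambda>_. A)) = prob A ^ card I"
proof -
  interpret finite_product_prob_space "\<lambda>_. M" I
    using assms(1) by unfold_locales
  show ?thesis
    using assms(2) by (simp add: finite_measure_PiM_emb)
qed

lemma nn_integral_PiM_component:
  assumes "i \<in> I" and [measurable]: "f \<in> borel_measurable M"
  shows "(\<integral>\<^sup>+x. f (x i) \<partial>PiM I (\<lambda>_. M)) = (\<integral>\<^sup>+y. f y \<partial>M)"
proof -
  have "(\<integral>\<^sup>+x. f (x i) \<partial>PiM I (\<lambda>_. M)) = (\<integral>\<^sup>+y. f y \<partial>distr (PiM I (\<lambda>_. M)) M (\<lambda>x. x i))"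
    using assms by (subst nn_integral_distr) auto
  also have "distr (PiM I (\<lambda>_. M)) M (\<lambda>x. x i) = M"
    using assms by (intro distr_PiM_component prob_space_axioms)
  finally show ?thesis .
qed

end

lemma measure_PiM_abs_Min_ge:
  fixes M :: "real measure"
  assumes "prob_space M" and borel: "sets M = sets borel" and I: "finite I" "I \<noteq> {}" and "0 < t"
  shows "measure (PiM I (\<lambda>_. M)) {x \<in> space (PiM I (\<lambda>_. M)). t \<le> \<bar>Min (x ` I)\<bar>} =
    measure M {t..} ^ card I + 1 - measure M {-t<..} ^ card I"
proof -
  let ?P = "PiM I (\<lambda>_. M)"
  interpret prob_space M by fact
  interpret P: prob_space ?P
    by (intro prob_space_PiM prob_space_axioms)
  have space: "space ?P = PiE I (\<lambda>_. UNIV)"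
    using sets_eq_imp_space_eq[OF borel] by (simp add: space_PiM)
  have sets: "A \<in> sets M" if "A \<in> sets borel" for A
    using that borel by simp
  let ?above = "{x \<in> space ?P. t \<le> Min (x ` I)}"
  let ?below = "{x \<in> space ?P. Min (x ` I) \<le> -t}"
  have above: "?above = PiE I (\<lambda>_. {t..})"
    using I by (intro set_eqI) (simp add: space PiE_iff Min_ge_iff conj_commute)
  have below: "?below = space ?P - PiE I (\<lambda>_. {-t<..})"
    using I by (intro set_eqI) (simp add: space PiE_iff Min_le_iff not_less, blast)
  have sets_above: "?above \<in> sets ?P"
    unfolding above using I by (intro sets_PiM_I_finite) (auto simp: borel)
  have sets_below: "?below \<in> sets ?P"
    unfolding below using I by (auto intro!: sets_PiM_I_finite simp: borel)
  have "{x \<in> space ?P. t \<le> \<bar>Min (x ` I)\<bar>} = ?above \<union> ?below"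
    by auto
  moreover have "measure ?P (?above \<union> ?below) = measure ?P ?above + measure ?P ?below"
    using \<open>0 < t\<close> sets_above sets_below by (intro P.finite_measure_Union) auto
  moreover have "measure ?P ?above = measure M {t..} ^ card I"
    unfolding above using I by (intro measure_PiM_PiE_const sets) auto
  moreover have "measure ?P ?below = 1 - measure M {-t<..} ^ card I"
    unfolding below using I
    by (subst P.prob_compl) (auto intro!: sets_PiM_I_finite sets measure_PiM_PiE_const)
  ultimately show ?thesis
    by simp
qed

lemma nn_integral_PiM_Min_square_le:
  fixes M :: "real measure" and I :: "'i set"
  assumes "prob_space M" and borel: "sets M = sets borel" and I: "finite I" "I \<noteq> {}"
  shows "(\<integral>\<^sup>+x. ennreal ((Min (x ` I))\<^sup>2) \<partial>PiM I (\<lambda>_. M)) \<le> card I * (\<integral>\<^sup>+y. ennreal (y\<^sup>2) \<partial>M)"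
proof -
  interpret prob_space M by fact
  have square_measurable: "(\<lambda>y. ennreal (y\<^sup>2)) \<in> borel_measurable M"
    using borel by simp
  have "(\<integral>\<^sup>+x. ennreal ((Min (x ` I))\<^sup>2) \<partial>PiM I (\<lambda>_. M)) \<le>
      (\<integral>\<^sup>+x. (\<Sum>i\<in>I. ennreal ((x i)\<^sup>2)) \<partial>PiM I (\<lambda>_. M))"
  proof (rule nn_integral_mono)
    fix x :: "'i \<Rightarrow> real"
    have "Min (x ` I) \<in> x ` I"
      using I by (intro Min_in) auto
    then obtain j where j: "j \<in> I" "Min (x ` I) = x j"
      by auto
    have "ennreal ((x j)\<^sup>2) \<le> (\<Sum>i\<in>I. ennreal ((x i)\<^sup>2))"
      using j I by (intro member_le_sum) auto
    then show "ennreal ((Min (x ` I))\<^sup>2) \<le> (\<Sum>i\<in>I. ennreal ((x i)\<^sup>2))"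
      using j by simp
  qed
  also have "\<dots> = (\<Sum>i\<in>I. (\<integral>\<^sup>+x. ennreal ((x i)\<^sup>2) \<partial>PiM I (\<lambda>_. M)))"
    using borel by (intro nn_integral_sum) auto
  also have "\<dots> = (\<Sum>i\<in>I. (\<integral>\<^sup>+y. ennreal (y\<^sup>2) \<partial>M))"
    using nn_integral_PiM_component[OF _ square_measurable] by (intro sum.cong) auto
  also have "\<dots> = card I * (\<integral>\<^sup>+y. ennreal (y\<^sup>2) \<partial>M)"
    by simp
  finally show ?thesis .
qed

(* For t > 0, abs_min_tail n (P(N \<ge> t)) = P(|min_i N_i| \<ge> t) for n i.i.d. copies N_i of a
   symmetric N. *)
definition abs_min_tail :: "nat \<Rightarrow> real \<Rightarrow> real" where
  "abs_min_tail n q = q ^ n + 1 - (1 - q) ^ n"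

lemma abs_min_tail_nonneg: "0 \<le> q \<Longrightarrow> q \<le> 1 \<Longrightarrow> 0 \<le> abs_min_tail n q"
  unfolding abs_min_tail_def using power_le_one[of "1 - q" n] by (smt (verit) zero_le_power)

lemma abs_min_tail_Suc_diff:
  "abs_min_tail (Suc (Suc m)) q - abs_min_tail (Suc m) q = q * (1 - q) * ((1 - q) ^ m - q ^ m)"
  unfolding abs_min_tail_def by (simp add: algebra_simps)

lemma abs_min_tail_2_eq_1: "abs_min_tail 2 q = abs_min_tail 1 q"
  using abs_min_tail_Suc_diff[of 0 q] by (simp add: numeral_2_eq_2)

lemma abs_min_tail_less_Suc:
  assumes "2 \<le> n" "0 < q" "q < 1 / 2"
  shows "abs_min_tail n q < abs_min_tail (Suc n) q"
proof -
  obtain m where n: "n = Suc (Suc m)"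
    using assms(1) le_Suc_ex[of 2 n] by auto
  have "q ^ Suc m < (1 - q) ^ Suc m"
    using assms by (intro power_strict_mono) auto
  then have "0 < q * (1 - q) * ((1 - q) ^ Suc m - q ^ Suc m)"
    using assms by simp
  then show ?thesis
    using abs_min_tail_Suc_diff[of "Suc m" q] n by simp
qed

lemma prob_space_std_normal_measure: "prob_space std_normal_measure"
  unfolding std_normal_measure_def by (rule prob_space_normal_density) simp

interpretation std_normal: prob_space std_normal_measure
  by (rule prob_space_std_normal_measure)

lemma sets_std_normal_measure [simp, measurable_cong]: "sets std_normal_measure = sets borel"
  unfolding std_normal_measure_def by simp

lemma space_std_normal_measure [simp]: "space std_normal_measure = UNIV"
  unfolding std_normal_measure_def by simp

lemma emeasure_std_normal_measure:
  "A \<in> sets borel \<Longrightarrow>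
    emeasure std_normal_measure A = (\<integral>\<^sup>+x. ennreal (std_normal_density x) * indicator A x \<partial>lborel)"
  unfolding std_normal_measure_def by (simp add: emeasure_density)

lemma std_normal_measure_atMost_uminus:
  "measure std_normal_measure {..-t} = measure std_normal_measure {t..}"
proof -
  have "emeasure std_normal_measure {t..} =
      (\<integral>\<^sup>+x. ennreal (std_normal_density x) * indicator {t..} x \<partial>lborel)"
    by (simp add: emeasure_std_normal_measure)
  also have "\<dots> = ennreal \<bar>-1\<bar> *
      (\<integral>\<^sup>+x. ennreal (std_normal_density (0 + (-1) * x)) * indicator {t..} (0 + (-1) * x) \<partial>lborel)"
    by (rule nn_integral_real_affine) auto
  also have "\<dots> = (\<integral>\<^sup>+x. ennreal (std_normal_density x) * indicator {..-t} x \<partial>lborel)"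
    by (auto intro!: nn_integral_cong simp: normal_density_def indicator_def)
  also have "\<dots> = emeasure std_normal_measure {..-t}"
    by (simp add: emeasure_std_normal_measure)
  finally show ?thesis
    by (simp add: std_normal.emeasure_eq_measure)
qed

lemma std_normal_measure_Icc_pos:
  assumes "a < b"
  shows "0 < measure std_normal_measure {a..b}"
proof -
  have "{x. ennreal (std_normal_density x) * indicator {a..b} x \<noteq> 0} = {a..b}"
    using normal_density_pos[of 1 0] by (auto simp: indicator_def) (metis less_irrefl)
  then have "emeasure std_normal_measure {a..b} \<noteq> 0"
    using assms by (simp add: emeasure_std_normal_measure nn_integral_0_iff)
  then show ?thesis
    by (simp add: std_normal.emeasure_eq_measure order_le_neq_trans)
qed

definition normal_tail :: "real \<Rightarrow> real" where
  "normal_tail t = measure std_normal_measure {t..}"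

lemma normal_tail_pos: "0 < normal_tail t"
proof -
  have "measure std_normal_measure {t..t + 1} \<le> normal_tail t"
    unfolding normal_tail_def by (rule std_normal.finite_measure_mono) auto
  with std_normal_measure_Icc_pos[of t "t + 1"] show ?thesis
    by simp
qed

lemma std_normal_measure_greaterThan_uminus:
  "measure std_normal_measure {-t<..} = 1 - normal_tail t"
proof -
  have "{-t<..} = space std_normal_measure - {..-t}"
    by auto
  then show ?thesis
    using std_normal.prob_compl[of "{..-t}"] std_normal_measure_atMost_uminus[of t]
    by (simp add: normal_tail_def)
qed

lemma normal_tail_less_half:
  assumes "0 < t"
  shows "normal_tail t < 1 / 2"
proof -
  have "measure std_normal_measure {-t<..} = measure std_normal_measure ({-t<..<t} \<union> {t..})"
    using assms by (intro arg_cong[where f="measure _"]) auto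
  also have "\<dots> = measure std_normal_measure {-t<..<t} + normal_tail t"
    unfolding normal_tail_def by (rule std_normal.finite_measure_Union) auto
  finally have "1 - normal_tail t = measure std_normal_measure {-t<..<t} + normal_tail t"
    by (simp add: std_normal_measure_greaterThan_uminus)
  moreover have "measure std_normal_measure {-t/2..t/2} \<le> measure std_normal_measure {-t<..<t}"
    using assms by (intro std_normal.finite_measure_mono) auto
  moreover have "0 < measure std_normal_measure {-t/2..t/2}"
    using assms by (intro std_normal_measure_Icc_pos) auto
  ultimately show ?thesis
    by linarith
qed

lemma borel_measurable_normal_tail [measurable]: "normal_tail \<in> borel_measurable borel"
proof -
  have "mono (\<lambda>t. - normal_tail t)"
    by (auto simp: mono_def normal_tail_def intro!: std_normal.finite_measure_mono)
  then have "(\<lambda>t. - (- normal_tail t)) \<in> borel_measurable borel"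
    by (intro borel_measurable_uminus borel_measurable_mono)
  then show ?thesis
    by simp
qed

lemma nn_integral_std_normal_square: "(\<integral>\<^sup>+y. ennreal (y\<^sup>2) \<partial>std_normal_measure) = 1"
proof -
  have "(\<integral>\<^sup>+y. ennreal (y\<^sup>2) \<partial>std_normal_measure) =
      (\<integral>\<^sup>+y. ennreal (std_normal_density y * y ^ (2 * 1)) \<partial>lborel)"
    unfolding std_normal_measure_def
    by (subst nn_integral_density) (auto intro!: nn_integral_cong simp: ennreal_mult')
  also have "\<dots> = ennreal (\<integral>y. std_normal_density y * y ^ (2 * 1) \<partial>lborel)"
    by (intro nn_integral_eq_integral integrable_std_normal_moment) auto
  also have "\<dots> = 1"
    by (simp only: integral_std_normal_moment_even) simp
  finally show ?thesis .
qed

abbreviation std_normal_PiM :: "nat \<Rightarrow> (nat \<Rightarrow> real) measure" where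
  "std_normal_PiM n \<equiv> PiM {..<n} (\<lambda>_. std_normal_measure)"

lemma prob_space_std_normal_PiM: "prob_space (std_normal_PiM n)"
  by (intro prob_space_PiM prob_space_std_normal_measure)

lemma measure_std_normal_PiM_abs_Min_ge:
  assumes "1 \<le> n" "0 < t"
  shows "measure (std_normal_PiM n) {x \<in> space (std_normal_PiM n). t \<le> \<bar>Min (x ` {..<n})\<bar>} =
    abs_min_tail n (normal_tail t)"
proof -
  have "{..<n} \<noteq> {}"
    using assms by (simp add: lessThan_empty_iff)
  with measure_PiM_abs_Min_ge[OF prob_space_std_normal_measure _ finite_lessThan _ \<open>0 < t\<close>]
  show ?thesis
    by (simp add: abs_min_tail_def normal_tail_def std_normal_measure_greaterThan_uminus)
qed

lemma nn_integral_std_normal_PiM_Min_square: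
  assumes "1 \<le> n"
  shows "(\<integral>\<^sup>+x. ennreal ((Min (x ` {..<n}))\<^sup>2) \<partial>std_normal_PiM n) =
    (\<integral>\<^sup>+t. ennreal (2 * t * abs_min_tail n (normal_tail t)) * indicator {0<..} t \<partial>lborel)"
proof -
  interpret prob_space "std_normal_PiM n"
    by (rule prob_space_std_normal_PiM)
  have "ennreal (2 * t) * emeasure (std_normal_PiM n) {x \<in> space (std_normal_PiM n). t \<le> \<bar>Min (x ` {..<n})\<bar>}
      * indicator {0<..} t = ennreal (2 * t * abs_min_tail n (normal_tail t)) * indicator {0<..} t" for t
    using measure_std_normal_PiM_abs_Min_ge[OF assms, of t]
    by (cases "0 < t") (simp_all add: emeasure_eq_measure ennreal_mult')
  then show ?thesis
    by (simp add: nn_integral_square_eq_tail_integral prob_space_imp_sigma_finite prob_space_axioms)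
qed

lemma nn_integral_std_normal_PiM_Min_square_finite:
  assumes "1 \<le> n"
  shows "(\<integral>\<^sup>+x. ennreal ((Min (x ` {..<n}))\<^sup>2) \<partial>std_normal_PiM n) < \<infinity>"
proof -
  have "{..<n} \<noteq> {}"
    using assms by (simp add: lessThan_empty_iff)
  then have "(\<integral>\<^sup>+x. ennreal ((Min (x ` {..<n}))\<^sup>2) \<partial>std_normal_PiM n) \<le> of_nat n"
    using nn_integral_PiM_Min_square_le[OF prob_space_std_normal_measure _ finite_lessThan]
    by (simp add: nn_integral_std_normal_square)
  also have "\<dots> < \<infinity>"
    using of_nat_less_top by auto
  finally show ?thesis .
qed

lemma E_min_sq_eq_nn_integral:
  "E_min_sq n = enn2real (\<integral>\<^sup>+x. ennreal ((Min (x ` {..<n}))\<^sup>2) \<partial>std_normal_PiM n)"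
  unfolding E_min_sq_def by (rule integral_eq_nn_integral) auto

lemma E_min_sq_1: "E_min_sq 1 = 1"
proof -
  have "Min (x ` {..<1}) = x 0" for x :: "nat \<Rightarrow> real"
    by (simp add: lessThan_Suc)
  then have "(\<integral>\<^sup>+x. ennreal ((Min (x ` {..<1}))\<^sup>2) \<partial>std_normal_PiM 1) =
      (\<integral>\<^sup>+x. ennreal ((x 0)\<^sup>2) \<partial>std_normal_PiM 1)"
    by (simp only:)
  also have "\<dots> = (\<integral>\<^sup>+y. ennreal (y\<^sup>2) \<partial>std_normal_measure)"
    by (rule std_normal.nn_integral_PiM_component[where f="\<lambda>y. ennreal (y\<^sup>2)"]) (simp, measurable)
  also have "\<dots> = 1"
    by (rule nn_integral_std_normal_square)
  finally show ?thesis
    by (simp add: E_min_sq_eq_nn_integral)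
qed

lemma nn_integral_std_normal_PiM_Min_square_less_Suc:
  assumes "2 \<le> n"
  shows "(\<integral>\<^sup>+x. ennreal ((Min (x ` {..<n}))\<^sup>2) \<partial>std_normal_PiM n) <
    (\<integral>\<^sup>+x. ennreal ((Min (x ` {..<Suc n}))\<^sup>2) \<partial>std_normal_PiM (Suc n))"
proof -
  have tail: "0 < normal_tail t" "normal_tail t < 1 / 2" if "0 < t" for t
    using normal_tail_pos normal_tail_less_half that by auto
  have less: "ennreal (2 * t * abs_min_tail n (normal_tail t)) * indicator {0<..} t <
      ennreal (2 * t * abs_min_tail (Suc n) (normal_tail t)) * indicator {0<..} t" if "0 < t" for t
    using that tail[of t] abs_min_tail_less_Suc[OF assms, of "normal_tail t"]
    by (simp add: ennreal_less_iff abs_min_tail_nonneg)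
  have "(\<integral>\<^sup>+t. ennreal (2 * t * abs_min_tail n (normal_tail t)) * indicator {0<..} t \<partial>lborel) <
      (\<integral>\<^sup>+t. ennreal (2 * t * abs_min_tail (Suc n) (normal_tail t)) * indicator {0<..} t \<partial>lborel)"
  proof (rule nn_integral_strict_mono[where A="{0<..<1}"])
    show "(\<integral>\<^sup>+t. ennreal (2 * t * abs_min_tail n (normal_tail t)) * indicator {0<..} t \<partial>lborel) \<noteq> \<infinity>"
      using nn_integral_std_normal_PiM_Min_square_finite[of n] assms
      by (simp add: nn_integral_std_normal_PiM_Min_square)
    show "AE t in lborel. ennreal (2 * t * abs_min_tail n (normal_tail t)) * indicator {0<..} t \<le>
        ennreal (2 * t * abs_min_tail (Suc n) (normal_tail t)) * indicator {0<..} t"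
      using less by (auto intro!: AE_I2 less_imp_le simp: indicator_def)
  qed (use less in \<open>simp_all add: abs_min_tail_def\<close>)
  with assms show ?thesis
    by (simp add: nn_integral_std_normal_PiM_Min_square)
qed

theorem lemma3:
  shows "E_min_sq 1 = 1 \<and> E_min_sq 2 = 1 \<and>
         (\<forall>l::nat. l \<ge> 2 \<longrightarrow> E_min_sq (l + 1) > E_min_sq l)"
proof (intro conjI allI impI)
  show "E_min_sq 1 = 1"
    by (rule E_min_sq_1)
  have "E_min_sq 2 = E_min_sq 1"
    by (simp add: E_min_sq_eq_nn_integral nn_integral_std_normal_PiM_Min_square abs_min_tail_2_eq_1)
  with E_min_sq_1 show "E_min_sq 2 = 1"
    by simp
  fix l :: nat
  assume "2 \<le> l"
  then show "E_min_sq (l + 1) > E_min_sq l"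
    using nn_integral_std_normal_PiM_Min_square_less_Suc nn_integral_std_normal_PiM_Min_square_finite[of "Suc l"]
    by (simp add: E_min_sq_eq_nn_integral enn2real_strict_mono)
qed

end
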